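(* Let $(X,d,\preccurlyeq)$ be a preordered $s$-regular $b$-metric space, let $x_0\in X$, and let $\mathcal{F}=\{f_\alpha\}_{\alpha\in\mathcal{I}}$ ($\mathcal I$ nonempty) be a concordantly isotone family of self mappings of $X$ with $f_\alpha(x_0)\preccurlyeq x_0$ for all $\alpha\in\mathcal{I}$. Suppose that for every chain $C\in\mathcal{C}_1(x_0,\mathcal{F},\preccurlyeq)$ there exists $w\in X$ which is a common lower bound of the chains $f_\alpha(C)$, $\alpha\in\mathcal{I}$, and there exist $z\in X$ and $\beta\in\mathcal{I}$ such that for all $\alpha\in\mathcal{I}$ and all $i\in\mathbb{N}$, $f_\alpha(w)\preccurlyeq w\preccurlyeq f_\beta^i(z)$, and $d(f_\alpha^i(w),f_\beta^i(z))\to 0$ as $i\to\infty$ for all $\alpha\in\mathcal I$. Then the set $\mathrm{ComFix}(\mathcal{F})\cap O_X(x_0)$ is nonempty and contains a minimal element.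
   Context: A $b$-metric space with coefficient $s\ge 1$ is a nonempty set $X$ with $d:X\times X\to[0,\infty)$ such that for all $x,y,z$: $d(x,y)=0$ iff $x=y$; $d(x,y)=d(y,x)$; $d(x,y)\le s[d(x,z)+d(z,y)]$. A preorder is a reflexive transitive relation $\preccurlyeq$; $x\succcurlyeq y$ means $y\preccurlyeq x$; $x\prec y$ means $x\preccurlyeq y$ and $x\ne y$. A preordered $s$-regular $b$-metric space $(X,d,\preccurlyeq)$ is a $b$-metric space with coefficient $s$ with a preorder such that $x\preccurlyeq y\preccurlyeq z$ implies $\max\{d(x,y),d(y,z)\}\le s^2d(x,z)$. A chain is a subset any two elements of which are comparable. $f^i$ is the $i$-th iterate. A family $\mathcal{F}=\{f_\alpha\}_{\alpha\in\mathcal I}$ of self maps is concordantly isotone if for all $x,y\in X$, $x\prec y$ implies $f_\alpha(x)\preccurlyeq f_\beta(y)$ for all $\alpha,\beta\in\mathcal{I}$. $O_X(x_0)=\{x:x\preccurlyeq x_0\}$. $\mathcal{C}_1(\mathcal F,\preccurlyeq)$ is the set of chains $C\subset\bigcup_{\alpha}f_\alpha(X)$ such that $f_\alpha(x)\preccurlyeq x$ for all $x\in C,\alpha\in\mathcal I$, and for all $x,y\in C$, $x\prec y$ implies $x\preccurlyeq f_\alpha(y)$ for all $\alpha$. $\mathcal{C}_1(x_0,\mathcal F,\preccurlyeq)=\{C\in\mathcal C_1(\mathcal F,\preccurlyeq): C\subset O_X(x_0)\cap\bigcup_\alpha f_\alpha(O_X(x_0))\}$. $\mathrm{ComFix}(\mathcal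 F)=\{x: f_\alpha(x)=x\ \forall\alpha\in\mathcal I\}$. A common lower bound of the sets $f_\alpha(C)$ is $w$ with $w\preccurlyeq f_\alpha(x)$ for all $x\in C$, $\alpha\in\mathcal I$. A minimal element of $A$ is $w\in A$ with no $u\in A$ such that $u\prec w$. *)

theory Defs
  imports Complex_Main
begin

definition b_metric :: "real \<Rightarrow> ('a \<Rightarrow> 'a \<Rightarrow> real) \<Rightarrow> bool" where
  "b_metric s d \<longleftrightarrow> s \<ge> 1 \<and> (\<forall>x y. d x y \<ge> 0) \<and> (\<forall>x y. d x y = 0 \<longleftrightarrow> x = y)
     \<and> (\<forall>x y. d x y = d y x) \<and> (\<forall>x y z. d x y \<le> s * (d x z + d z y))"

definition preorder_rel :: "('a \<Rightarrow> 'a \<Rightarrow> bool) \<Rightarrow> bool" where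
  "preorder_rel le \<longleftrightarrow> (\<forall>x. le x x) \<and> (\<forall>x y z. le x y \<and> le y z \<longrightarrow> le x z)"

definition strict_rel :: "('a \<Rightarrow> 'a \<Rightarrow> bool) \<Rightarrow> 'a \<Rightarrow> 'a \<Rightarrow> bool" where
  "strict_rel le x y \<longleftrightarrow> le x y \<and> x \<noteq> y"

text \<open>Preordered s-regular b-metric space (X,d,le), X = UNIV.\<close>
definition preordered_s_regular_b_metric ::
  "real \<Rightarrow> ('a \<Rightarrow> 'a \<Rightarrow> real) \<Rightarrow> ('a \<Rightarrow> 'a \<Rightarrow> bool) \<Rightarrow> bool" where
  "preordered_s_regular_b_metric s d le \<longleftrightarrow> b_metric s d \<and> preorder_rel le \<and>
     (\<forall>x y z. le x y \<and> le y z \<longrightarrow> max (d x y) (d y z) \<le> s\<^sup>2 * d x z)"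

definition is_chain :: "('a \<Rightarrow> 'a \<Rightarrow> bool) \<Rightarrow> 'a set \<Rightarrow> bool" where
  "is_chain le C \<longleftrightarrow> (\<forall>x\<in>C. \<forall>y\<in>C. le x y \<or> le y x)"

definition concordantly_isotone ::
  "('a \<Rightarrow> 'a \<Rightarrow> bool) \<Rightarrow> 'i set \<Rightarrow> ('i \<Rightarrow> 'a \<Rightarrow> 'a) \<Rightarrow> bool" where
  "concordantly_isotone le I f \<longleftrightarrow>
     (\<forall>x y. strict_rel le x y \<longrightarrow> (\<forall>\<alpha>\<in>I. \<forall>\<beta>\<in>I. le (f \<alpha> x) (f \<beta> y)))"

definition lower_set :: "('a \<Rightarrow> 'a \<Rightarrow> bool) \<Rightarrow> 'a \<Rightarrow> 'a set" where
  "lower_set le x0 = {x. le x x0}"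

definition C1 :: "('a \<Rightarrow> 'a \<Rightarrow> bool) \<Rightarrow> 'i set \<Rightarrow> ('i \<Rightarrow> 'a \<Rightarrow> 'a) \<Rightarrow> 'a set set" where
  "C1 le I f = {C. is_chain le C \<and> C \<subseteq> (\<Union>\<alpha>\<in>I. range (f \<alpha>))
      \<and> (\<forall>x\<in>C. \<forall>\<alpha>\<in>I. le (f \<alpha> x) x)
      \<and> (\<forall>x\<in>C. \<forall>y\<in>C. strict_rel le x y \<longrightarrow> (\<forall>\<alpha>\<in>I. le x (f \<alpha> y)))}"

definition C1_at :: "'a \<Rightarrow> ('a \<Rightarrow> 'a \<Rightarrow> bool) \<Rightarrow> 'i set \<Rightarrow> ('i \<Rightarrow> 'a \<Rightarrow> 'a) \<Rightarrow> 'a set set" where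
  "C1_at x0 le I f = {C \<in> C1 le I f.
      C \<subseteq> lower_set le x0 \<inter> (\<Union>\<alpha>\<in>I. f \<alpha> ` lower_set le x0)}"

definition ComFix :: "'i set \<Rightarrow> ('i \<Rightarrow> 'a \<Rightarrow> 'a) \<Rightarrow> 'a set" where
  "ComFix I f = {x. \<forall>\<alpha>\<in>I. f \<alpha> x = x}"

definition common_lower_bound ::
  "('a \<Rightarrow> 'a \<Rightarrow> bool) \<Rightarrow> 'i set \<Rightarrow> ('i \<Rightarrow> 'a \<Rightarrow> 'a) \<Rightarrow> 'a set \<Rightarrow> 'a \<Rightarrow> bool" where
  "common_lower_bound le I f C w \<longleftrightarrow> (\<forall>x\<in>C. \<forall>\<alpha>\<in>I. le w (f \<alpha> x))"

definition minimal_element :: "('a \<Rightarrow> 'a \<Rightarrow> bool) \<Rightarrow> 'a set \<Rightarrow> 'a \<Rightarrow> bool" where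
  "minimal_element le A w \<longleftrightarrow> w \<in> A \<and> \<not> (\<exists>u\<in>A. strict_rel le u w)"

end

theory Submission
  imports Defs
begin

text \<open>
  The common fixed points of \<open>\<F>\<close> below \<open>x\<^sub>0\<close> form a partially ordered set: \<open>s\<close>-regularity
  forces \<open>d x y \<le> s\<^sup>2 d x x = 0\<close> whenever \<open>x \<preccurlyeq> y \<preccurlyeq> x\<close>. Every chain of common fixed points
  lies in \<open>\<C>\<^sub>1(x\<^sub>0,\<F>,\<preccurlyeq>)\<close>, so the hypothesis provides a lower bound \<open>w\<close> of it, and \<open>w\<close> is itself
  a common fixed point: the orbit \<open>f\<^sub>\<alpha>\<^sup>i(w)\<close> decreases, and it is squeezed against \<open>w\<close> by
  \<open>f\<^sub>\<alpha>\<^sup>i(w) \<preccurlyeq> w \<preccurlyeq> f\<^sub>\<beta>\<^sup>i(z)\<close>, so \<open>s\<close>-regularity turns \<open>d(f\<^sub>\<alpha>\<^sup>i(w), f\<^sub>\<beta>\<^sup>i(z)) \<rightarrow> 0\<close> first into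
  \<open>f\<^sub>\<alpha>\<^sup>i(w) \<rightarrow> w\<close> and then, via \<open>f\<^sub>\<alpha>\<^sup>i(w) \<preccurlyeq> f\<^sub>\<alpha>(w) \<preccurlyeq> w\<close>, into \<open>f\<^sub>\<alpha>(w) = w\<close>. Applied to the
  chain \<open>{f\<^sub>\<alpha>(x\<^sub>0)}\<close> this gives a first common fixed point, and Zorn's lemma a minimal one.
\<close>

lemma minimal_element_if_chains_bounded_below:
  assumes "preorder_rel le"
    and antisym: "\<And>x y. x \<in> A \<Longrightarrow> y \<in> A \<Longrightarrow> le x y \<Longrightarrow> le y x \<Longrightarrow> x = y"
    and "A \<noteq> {}"
    and bounded: "\<And>C. C \<subseteq> A \<Longrightarrow> C \<noteq> {} \<Longrightarrow> is_chain le C \<Longrightarrow> \<exists>w\<in>A. \<forall>x\<in>C. le w x"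
  shows "\<exists>w. minimal_element le A w"
proof -
  have "\<exists>m\<in>A. \<forall>a\<in>A. le a m \<longrightarrow> a = m"
  proof (rule predicate_Zorn)
    show "partial_order_on A (relation_of (\<lambda>a b. le b a) A)"
      using \<open>preorder_rel le\<close> antisym
      unfolding partial_order_on_def preorder_on_def refl_on_def trans_def antisym_def
        relation_of_def preorder_rel_def
      by blast
  next
    fix C assume C: "C \<in> Chains (relation_of (\<lambda>a b. le b a) A)"
    then have "C \<subseteq> A" and "is_chain le C"
      unfolding Chains_def relation_of_def is_chain_def by blast+
    then show "\<exists>u\<in>A. \<forall>a\<in>C. le u a"
      using bounded \<open>A \<noteq> {}\<close> by (cases "C = {}") auto
  qed
  then show ?thesis
    unfolding minimal_element_def strict_rel_def by blast
qed

lemma common_lower_bound_of_fixed_points: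
  assumes "common_lower_bound le I f C w" and "C \<subseteq> ComFix I f" and "\<alpha> \<in> I" and "x \<in> C"
  shows "le w x"
proof -
  have "le w (f \<alpha> x)"
    using assms(1,3,4) unfolding common_lower_bound_def by blast
  moreover have "f \<alpha> x = x"
    using assms(2-4) unfolding ComFix_def by blast
  ultimately show ?thesis
    by simp
qed

locale s_regular_space =
  fixes s :: real and d :: "'a \<Rightarrow> 'a \<Rightarrow> real" and le :: "'a \<Rightarrow> 'a \<Rightarrow> bool"
  assumes space: "preordered_s_regular_b_metric s d le"
begin

lemma le_preorder: "preorder_rel le"
  using space unfolding preordered_s_regular_b_metric_def by blast

lemma le_reflexive: "le x x"
  using le_preorder unfolding preorder_rel_def by blast

lemma le_transitive: "le x y \<Longrightarrow> le y z \<Longrightarrow> le x z"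
  using le_preorder unfolding preorder_rel_def by blast

lemma d_nonneg: "d x y \<ge> 0"
  using space unfolding preordered_s_regular_b_metric_def b_metric_def by blast

lemma d_eq_0_iff: "d x y = 0 \<longleftrightarrow> x = y"
  using space unfolding preordered_s_regular_b_metric_def b_metric_def by blast

lemma d_le_left_if_between: "le x y \<Longrightarrow> le y z \<Longrightarrow> d x y \<le> s\<^sup>2 * d x z"
  using space unfolding preordered_s_regular_b_metric_def by fastforce

lemma d_le_right_if_between: "le x y \<Longrightarrow> le y z \<Longrightarrow> d y z \<le> s\<^sup>2 * d x z"
  using space unfolding preordered_s_regular_b_metric_def by fastforce

lemma le_antisymmetric:
  assumes "le x y" and "le y x"
  shows "x = y"
proof -
  have "d x y \<le> s\<^sup>2 * d x x"
    using d_le_left_if_between[OF assms] .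
  then have "d x y \<le> 0"
    using d_eq_0_iff[of x x] by simp
  then show ?thesis
    using d_nonneg[of x y] d_eq_0_iff[of x y] by simp
qed

lemma tendsto_d_if_between:
  assumes "\<forall>\<^sub>F n in sequentially. le (x n) a \<and> le a (y n)"
    and "(\<lambda>n. d (x n) (y n)) \<longlonglongrightarrow> 0"
  shows "(\<lambda>n. d (x n) a) \<longlonglongrightarrow> 0"
proof (rule tendsto_sandwich[OF _ _ tendsto_const])
  show "\<forall>\<^sub>F n in sequentially. 0 \<le> d (x n) a"
    by (simp add: d_nonneg)
  show "\<forall>\<^sub>F n in sequentially. d (x n) a \<le> s\<^sup>2 * d (x n) (y n)"
    using assms(1) by eventually_elim (blast intro: d_le_left_if_between)
  show "(\<lambda>n. s\<^sup>2 * d (x n) (y n)) \<longlonglongrightarrow> 0"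
    using tendsto_mult_right_zero[OF assms(2)] .
qed

lemma eq_if_squeezed:
  assumes "\<forall>\<^sub>F n in sequentially. le (x n) a"
    and "le a b"
    and "(\<lambda>n. d (x n) b) \<longlonglongrightarrow> 0"
  shows "a = b"
proof -
  have "d a b \<le> 0"
  proof (rule tendsto_le[OF _ tendsto_mult_right_zero[OF assms(3)] tendsto_const])
    show "\<forall>\<^sub>F n in sequentially. d a b \<le> s\<^sup>2 * d (x n) b"
      using assms(1) by eventually_elim (rule d_le_right_if_between[OF _ assms(2)])
  qed simp
  then show ?thesis
    using d_nonneg[of a b] by (simp add: d_eq_0_iff)
qed

end

locale concordant_family = s_regular_space s d le
  for s :: real and d :: "'a \<Rightarrow> 'a \<Rightarrow> real" and le :: "'a \<Rightarrow> 'a \<Rightarrow> bool" +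
  fixes I :: "'i set" and f :: "'i \<Rightarrow> 'a \<Rightarrow> 'a"
  assumes iso: "concordantly_isotone le I f"
begin

lemma orbit_step_le:
  assumes "\<alpha> \<in> I" and "le (f \<alpha> w) w"
  shows "le ((f \<alpha> ^^ Suc i) w) ((f \<alpha> ^^ i) w)"
proof (induction i)
  case 0
  show ?case using assms(2) by simp
next
  case (Suc i)
  show ?case
  proof (cases "(f \<alpha> ^^ Suc i) w = (f \<alpha> ^^ i) w")
    case True
    then show ?thesis by (simp add: le_reflexive)
  next
    case False
    then have "strict_rel le ((f \<alpha> ^^ Suc i) w) ((f \<alpha> ^^ i) w)"
      using Suc.IH unfolding strict_rel_def by simp
    then show ?thesis
      using iso \<open>\<alpha> \<in> I\<close> unfolding concordantly_isotone_def by simp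
  qed
qed

lemma orbit_le_first:
  assumes "\<alpha> \<in> I" and "le (f \<alpha> w) w" and "i \<ge> 1"
  shows "le ((f \<alpha> ^^ i) w) (f \<alpha> w)"
  using \<open>i \<ge> 1\<close>
proof (induction i rule: dec_induct)
  case base
  show ?case by (simp add: le_reflexive)
next
  case (step n)
  then show ?case
    using orbit_step_le[OF assms(1,2), of n] le_transitive by blast
qed

lemma fixed_point_if_orbit_approaches_above:
  assumes "\<alpha> \<in> I" and "le (f \<alpha> w) w"
    and "\<forall>\<^sub>F i in sequentially. le w (y i)"
    and "(\<lambda>i. d ((f \<alpha> ^^ i) w) (y i)) \<longlonglongrightarrow> 0"
  shows "f \<alpha> w = w"
proof (rule eq_if_squeezed[OF _ assms(2)])
  show below_first: "\<forall>\<^sub>F i in sequentially. le ((f \<alpha> ^^ i) w) (f \<alpha> w)"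
    using orbit_le_first[OF assms(1,2)] by (rule eventually_sequentiallyI)
  show "(\<lambda>i. d ((f \<alpha> ^^ i) w) w) \<longlonglongrightarrow> 0"
  proof (rule tendsto_d_if_between[OF _ assms(4)])
    show "\<forall>\<^sub>F i in sequentially. le ((f \<alpha> ^^ i) w) w \<and> le w (y i)"
      using below_first assms(3)
      by eventually_elim (blast intro: le_transitive assms(2))
  qed
qed

lemma ComFix_if_orbits_approach:
  assumes "\<exists>z. \<exists>\<beta>\<in>I.
           (\<forall>\<alpha>\<in>I. \<forall>i::nat. i \<ge> 1 \<longrightarrow> le (f \<alpha> w) w \<and> le w ((f \<beta> ^^ i) z)) \<and>
           (\<forall>\<alpha>\<in>I. (\<lambda>i. d ((f \<alpha> ^^ i) w) ((f \<beta> ^^ i) z)) \<longlonglongrightarrow> 0)"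
  shows "w \<in> ComFix I f"
proof -
  obtain z \<beta> where "\<beta> \<in> I"
    and le_orbit: "\<forall>\<alpha>\<in>I. \<forall>i::nat. i \<ge> 1 \<longrightarrow> le (f \<alpha> w) w \<and> le w ((f \<beta> ^^ i) z)"
    and lim: "\<forall>\<alpha>\<in>I. (\<lambda>i. d ((f \<alpha> ^^ i) w) ((f \<beta> ^^ i) z)) \<longlonglongrightarrow> 0"
    using assms by blast
  have "f \<alpha> w = w" if "\<alpha> \<in> I" for \<alpha>
  proof (rule fixed_point_if_orbit_approaches_above[OF that])
    show "le (f \<alpha> w) w"
      using le_orbit that by blast
    show "\<forall>\<^sub>F i in sequentially. le w ((f \<beta> ^^ i) z)"
      using le_orbit \<open>\<beta> \<in> I\<close> by (blast intro: eventually_sequentiallyI)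
    show "(\<lambda>i. d ((f \<alpha> ^^ i) w) ((f \<beta> ^^ i) z)) \<longlonglongrightarrow> 0"
      using lim that by blast
  qed
  then show ?thesis
    unfolding ComFix_def by blast
qed

lemma image_decreasing_if_decreasing:
  assumes "\<forall>\<alpha>\<in>I. le (f \<alpha> x) x" and "\<alpha> \<in> I" and "\<beta> \<in> I"
  shows "le (f \<alpha> (f \<beta> x)) (f \<beta> x)"
proof (cases "f \<beta> x = x")
  case True
  then show ?thesis using assms(1,2) by simp
next
  case False
  then have "strict_rel le (f \<beta> x) x"
    using assms(1,3) unfolding strict_rel_def by blast
  then show ?thesis
    using iso assms(2,3) unfolding concordantly_isotone_def by blast
qed

lemma singleton_image_in_C1_at:
  assumes "\<forall>\<alpha>\<in>I. le (f \<alpha> x0) x0" and "\<beta> \<in> I"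
  shows "{f \<beta> x0} \<in> C1_at x0 le I f"
proof -
  have "le (f \<alpha> (f \<beta> x0)) (f \<beta> x0)" if "\<alpha> \<in> I" for \<alpha>
    using image_decreasing_if_decreasing[OF assms(1) that assms(2)] .
  moreover have "f \<beta> x0 \<in> lower_set le x0 \<inter> f \<beta> ` lower_set le x0"
    using assms le_reflexive unfolding lower_set_def by blast
  ultimately show ?thesis
    using assms(2) le_reflexive
    unfolding C1_at_def C1_def is_chain_def strict_rel_def by blast
qed

lemma chain_of_common_fixed_points_in_C1_at:
  assumes "I \<noteq> {}" and "is_chain le C" and "C \<subseteq> ComFix I f \<inter> lower_set le x0"
  shows "C \<in> C1_at x0 le I f"
proof -
  have fixed: "f \<alpha> x = x" if "x \<in> C" and "\<alpha> \<in> I" for x \<alpha>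
    using assms(3) that unfolding ComFix_def by blast
  obtain \<alpha> where "\<alpha> \<in> I"
    using assms(1) by blast
  have "C \<subseteq> f \<alpha> ` C"
    using fixed \<open>\<alpha> \<in> I\<close> by (metis image_eqI subsetI)
  then have "C \<subseteq> lower_set le x0 \<inter> f \<alpha> ` lower_set le x0"
    using assms(3) by blast
  then have "C \<subseteq> range (f \<alpha>) \<and> C \<subseteq> lower_set le x0 \<inter> (\<Union>\<beta>\<in>I. f \<beta> ` lower_set le x0)"
    using \<open>\<alpha> \<in> I\<close> by blast
  moreover have "le (f \<beta> x) x" if "x \<in> C" and "\<beta> \<in> I" for x \<beta>
    using that fixed le_reflexive by simp
  moreover have "le x (f \<beta> y)" if "y \<in> C" and "\<beta> \<in> I" and "strict_rel le x y" for x y \<beta>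
    using that fixed unfolding strict_rel_def by simp
  ultimately show ?thesis
    using assms(2) \<open>\<alpha> \<in> I\<close> unfolding C1_at_def C1_def by blast
qed

lemma common_lower_bound_le_base:
  assumes "C \<in> C1_at x0 le I f" and "x \<in> C" and "\<alpha> \<in> I"
    and "common_lower_bound le I f C w"
  shows "le w x0"
proof -
  have "le w (f \<alpha> x)"
    using assms(2-4) unfolding common_lower_bound_def by blast
  moreover have "le (f \<alpha> x) x" and "le x x0"
    using assms(1-3) unfolding C1_at_def C1_def lower_set_def by blast+
  ultimately show ?thesis
    using le_transitive by blast
qed

end

theorem theorem3p1:
  fixes s :: real and d :: "'a \<Rightarrow> 'a \<Rightarrow> real" and le :: "'a \<Rightarrow> 'a \<Rightarrow> bool"
    and x0 :: 'a and I :: "'i set" and f :: "'i \<Rightarrow> 'a \<Rightarrow> 'a"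
  assumes space: "preordered_s_regular_b_metric s d le"
    and I_ne: "I \<noteq> {}"
    and iso: "concordantly_isotone le I f"
    and x0: "\<forall>\<alpha>\<in>I. le (f \<alpha> x0) x0"
    and chains: "\<forall>C \<in> C1_at x0 le I f. \<exists>w. common_lower_bound le I f C w \<and>
        (\<exists>z. \<exists>\<beta>\<in>I.
           (\<forall>\<alpha>\<in>I. \<forall>i::nat. i \<ge> 1 \<longrightarrow> le (f \<alpha> w) w \<and> le w ((f \<beta> ^^ i) z)) \<and>
           (\<forall>\<alpha>\<in>I. (\<lambda>i. d ((f \<alpha> ^^ i) w) ((f \<beta> ^^ i) z)) \<longlonglongrightarrow> 0))"
  shows "ComFix I f \<inter> lower_set le x0 \<noteq> {} \<and>
         (\<exists>w. minimal_element le (ComFix I f \<inter> lower_set le x0) w)"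
proof -
  interpret concordant_family s d le I f
    by unfold_locales (fact space, fact iso)
  define A where "A = ComFix I f \<inter> lower_set le x0"
  obtain \<beta> where "\<beta> \<in> I"
    using I_ne by blast
  have bounded: "\<exists>w\<in>A. common_lower_bound le I f C w"
    if C: "C \<in> C1_at x0 le I f" and "x \<in> C" for C x
  proof -
    obtain w where "common_lower_bound le I f C w" and "w \<in> ComFix I f"
      using chains C ComFix_if_orbits_approach by meson
    moreover have "le w x0"
      using common_lower_bound_le_base[OF C \<open>x \<in> C\<close> \<open>\<beta> \<in> I\<close>] calculation(1) .
    ultimately show ?thesis
      unfolding A_def lower_set_def by blast
  qed
  have "A \<noteq> {}"
    using bounded[OF singleton_image_in_C1_at[OF x0 \<open>\<beta> \<in> I\<close>]] by blast
  moreover have "\<exists>w. minimal_element le A w"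
  proof (rule minimal_element_if_chains_bounded_below[OF le_preorder _ \<open>A \<noteq> {}\<close>])
    show "x = y" if "le x y" and "le y x" for x y
      using le_antisymmetric[OF that] .
    fix C assume "C \<subseteq> A" and "C \<noteq> {}" and "is_chain le C"
    then have "C \<in> C1_at x0 le I f"
      using chain_of_common_fixed_points_in_C1_at I_ne unfolding A_def by blast
    then obtain w where "w \<in> A" and lower_bound: "common_lower_bound le I f C w"
      using bounded \<open>C \<noteq> {}\<close> by blast
    have "C \<subseteq> ComFix I f"
      using \<open>C \<subseteq> A\<close> unfolding A_def by blast
    then show "\<exists>w\<in>A. \<forall>x\<in>C. le w x"
      using \<open>w \<in> A\<close> common_lower_bound_of_fixed_points[OF lower_bound _ \<open>\<beta> \<in> I\<close>] by blast
  qed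
  ultimately show ?thesis
    unfolding A_def by blast
qed

end
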